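(* Let $(D,\mathrm{left},\mathrm{right})$ be an interval domain. For $a\le b$ in $\max(D)$ let $\phi^{-1}[a,b]$ denote the unique $z\in D$ with $\mathrm{left}(z)=a$ and $\mathrm{right}(z)=b$. Then: (i) if $a\ll p\ll b$ in $(\max(D),\le)$, then $\phi^{-1}[a,b]\ll p$ in $D$; (ii) the interval topology on the bicontinuous poset $(\max(D),\le)$ coincides with the relative Scott topology that $\max(D)$ inherits from $D$. Thus $(\max(D),\le)$ is a globally hyperbolic poset.
   Context: For a poset $(P,\sqsubseteq)$: directed (resp. filtered) sets are nonempty sets in which any two elements have an upper (resp. lower) bound in the set; $\bigsqcup S$ is the supremum; $x\ll y$ iff for every directed $S\subseteq P$ with a supremum, $y\sqsubseteq\bigsqcup S$ implies $x\sqsubseteq s$ for some $s\in S$; $\Uparrow x=\{a: x\ll a\}$, $\Downarrow x=\{a:a\ll x\}$. $P$ is continuous if there is $B\subseteq P$ such that for each $x$, $B\cap\Downarrow x$ contains a directed set with supremum $x$. A continuous poset is bicontinuous if (1) $x\ll y$ iff for every filtered $S$ having an infimum, $\bigwedge S\sqsubseteq x$ implies $s\sqsubseteq y$ for some $s\in S$; and (2) each $\Uparrow x$ is filtered with infimum $x$. On a bicontinuous poset the sets $(a,b)=\{x: a\ll x\ll b\}$ form a basis of the interval topology. A globally hyperbolic poset is a bicontinuous poset in which every closed interval $\{x: a\le x\le b\}$ is compact in the interval topology. A continuous dcpo is a continuous poset in which every directed set has a supremum. $\max(P)$ is the set of maximal elements, $x\sqcap y$ the infimum of $\{x,y\}$.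 The Scott topology consists of upper sets $U$ such that $\bigsqcup S\in U$ implies $S\cap U\ne\emptyset$ for directed $S$. An interval poset is a poset $D$ with functions $\mathrm{left},\mathrm{right}:D\to\max(D)$ such that (only named infima are assumed to exist): (i) $x=\mathrm{left}(x)\sqcap\mathrm{right}(x)$ for all $x$; (ii) if $\mathrm{right}(x)=\mathrm{left}(y)$ then $\mathrm{left}(x\sqcap y)=\mathrm{left}(x)$ and $\mathrm{right}(x\sqcap y)=\mathrm{right}(y)$; (iii) for $p\in\max(D)$ with $x\sqsubseteq p$: $\mathrm{left}(\mathrm{left}(x)\sqcap p)=\mathrm{left}(x)$, $\mathrm{right}(\mathrm{left}(x)\sqcap p)=p$, $\mathrm{left}(p\sqcap\mathrm{right}(x))=p$, $\mathrm{right}(p\sqcap\mathrm{right}(x))=\mathrm{right}(x)$. On $\max(D)$ define $a\le b$ iff $a=\mathrm{left}(z)$, $b=\mathrm{right}(z)$ for some $z\in D$; this is a partial order, and $x\mapsto[\mathrm{left}(x),\mathrm{right}(x)]$ is an order isomorphism from $D$ onto the closed intervals of $(\max(D),\le)$ under reverse inclusion. For $p,q\in\max(D)$ let $[p,\cdot]=\mathrm{left}^{-1}(p)$ and $[\cdot,q]=\mathrm{right}^{-1}(q)$, regarded as subposets of $D$. An interval domain is an interval poset $(D,\mathrm{left},\mathrm{right})$ such that $D$ is a continuous dcpo and: (i) if $p\in\Uparrow x\cap\max(D)$ then $\Uparrow(\mathrm{left}(x)\sqcap p)\ne\emptyset$ and $\Uparrow(p\sqcap\mathrm{right}(x))\ne\emptyset$;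 (ii) for all $x\in D$ the following are equivalent: (a) $\Uparrow x\ne\emptyset$; (b) for all $y\in[\mathrm{left}(x),\cdot]$ with $y\sqsubseteq x$, $y\ll\mathrm{right}(y)$ in the poset $[\cdot,\mathrm{right}(y)]$; (c) for all $y\in[\cdot,\mathrm{right}(x)]$ with $y\sqsubseteq x$, $y\ll\mathrm{left}(y)$ in the poset $[\mathrm{left}(y),\cdot]$; (iii)(a) for every directed $S\subseteq[p,\cdot]$, $\mathrm{left}(\bigsqcup S)=p$ and $\mathrm{right}(\bigsqcup S)=\mathrm{right}(\bigsqcup T)$ for every directed $T\subseteq[q,\cdot]$ with $\mathrm{right}(T)=\mathrm{right}(S)$ (images); (iii)(b) for every directed $S\subseteq[\cdot,q]$, $\mathrm{right}(\bigsqcup S)=q$ and $\mathrm{left}(\bigsqcup S)=\mathrm{left}(\bigsqcup T)$ for every directed $T\subseteq[\cdot,p]$ with $\mathrm{left}(T)=\mathrm{left}(S)$; (iv) for all $x\in D$, $\{y\in\max(D): x\sqsubseteq y\}$ is compact in the relative Scott topology. For an interval domain, $(\max(D),\le)$ is a bicontinuous poset. *)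

theory Defs
  imports "HOL-Analysis.Analysis"
begin

definition poset :: "'a set \<Rightarrow> ('a \<Rightarrow> 'a \<Rightarrow> bool) \<Rightarrow> bool" where
  "poset P le \<longleftrightarrow> (\<forall>x\<in>P. le x x)
     \<and> (\<forall>x\<in>P. \<forall>y\<in>P. le x y \<and> le y x \<longrightarrow> x = y)
     \<and> (\<forall>x\<in>P. \<forall>y\<in>P. \<forall>z\<in>P. le x y \<and> le y z \<longrightarrow> le x z)"

definition directed :: "'a set \<Rightarrow> ('a \<Rightarrow> 'a \<Rightarrow> bool) \<Rightarrow> 'a set \<Rightarrow> bool" where
  "directed P le S \<longleftrightarrow> S \<subseteq> P \<and> S \<noteq> {} \<and> (\<forall>x\<in>S. \<forall>y\<in>S. \<exists>z\<in>S. le x z \<and> le y z)"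

definition filtered :: "'a set \<Rightarrow> ('a \<Rightarrow> 'a \<Rightarrow> bool) \<Rightarrow> 'a set \<Rightarrow> bool" where
  "filtered P le S \<longleftrightarrow> S \<subseteq> P \<and> S \<noteq> {} \<and> (\<forall>x\<in>S. \<forall>y\<in>S. \<exists>z\<in>S. le z x \<and> le z y)"

definition is_sup :: "'a set \<Rightarrow> ('a \<Rightarrow> 'a \<Rightarrow> bool) \<Rightarrow> 'a set \<Rightarrow> 'a \<Rightarrow> bool" where
  "is_sup P le S s \<longleftrightarrow> s \<in> P \<and> (\<forall>x\<in>S. le x s) \<and> (\<forall>u\<in>P. (\<forall>x\<in>S. le x u) \<longrightarrow> le s u)"

definition is_inf :: "'a set \<Rightarrow> ('a \<Rightarrow> 'a \<Rightarrow> bool) \<Rightarrow> 'a set \<Rightarrow> 'a \<Rightarrow> bool" where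
  "is_inf P le S i \<longleftrightarrow> i \<in> P \<and> (\<forall>x\<in>S. le i x) \<and> (\<forall>u\<in>P. (\<forall>x\<in>S. le u x) \<longrightarrow> le u i)"

definition psup :: "'a set \<Rightarrow> ('a \<Rightarrow> 'a \<Rightarrow> bool) \<Rightarrow> 'a set \<Rightarrow> 'a" where
  "psup P le S = (THE s. is_sup P le S s)"

definition meet :: "'a set \<Rightarrow> ('a \<Rightarrow> 'a \<Rightarrow> bool) \<Rightarrow> 'a \<Rightarrow> 'a \<Rightarrow> 'a" where
  "meet P le x y = (THE i. is_inf P le {x, y} i)"

definition way_below :: "'a set \<Rightarrow> ('a \<Rightarrow> 'a \<Rightarrow> bool) \<Rightarrow> 'a \<Rightarrow> 'a \<Rightarrow> bool" where
  "way_below P le x y \<longleftrightarrow> x \<in> P \<and> y \<in> P \<and>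
     (\<forall>S s. directed P le S \<longrightarrow> is_sup P le S s \<longrightarrow> le y s \<longrightarrow> (\<exists>t\<in>S. le x t))"

definition wb_up :: "'a set \<Rightarrow> ('a \<Rightarrow> 'a \<Rightarrow> bool) \<Rightarrow> 'a \<Rightarrow> 'a set" where
  "wb_up P le x = {a \<in> P. way_below P le x a}"

definition wb_down :: "'a set \<Rightarrow> ('a \<Rightarrow> 'a \<Rightarrow> bool) \<Rightarrow> 'a \<Rightarrow> 'a set" where
  "wb_down P le x = {a \<in> P. way_below P le a x}"

definition continuous_poset :: "'a set \<Rightarrow> ('a \<Rightarrow> 'a \<Rightarrow> bool) \<Rightarrow> bool" where
  "continuous_poset P le \<longleftrightarrow> poset P le \<and>
     (\<exists>B\<subseteq>P. \<forall>x\<in>P. \<exists>S. S \<subseteq> B \<inter> wb_down P le x \<and> directed P le S \<and> is_sup P le S x)"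

definition bicontinuous :: "'a set \<Rightarrow> ('a \<Rightarrow> 'a \<Rightarrow> bool) \<Rightarrow> bool" where
  "bicontinuous P le \<longleftrightarrow> continuous_poset P le
     \<and> (\<forall>x\<in>P. \<forall>y\<in>P. way_below P le x y \<longleftrightarrow>
          (\<forall>S i. filtered P le S \<longrightarrow> is_inf P le S i \<longrightarrow> le i x \<longrightarrow> (\<exists>s\<in>S. le s y)))
     \<and> (\<forall>x\<in>P. filtered P le (wb_up P le x) \<and> is_inf P le (wb_up P le x) x)"

definition open_interval :: "'a set \<Rightarrow> ('a \<Rightarrow> 'a \<Rightarrow> bool) \<Rightarrow> 'a \<Rightarrow> 'a \<Rightarrow> 'a set" where
  "open_interval P le a b = {x \<in> P. way_below P le a x \<and> way_below P le x b}"

definition interval_topology :: "'a set \<Rightarrow> ('a \<Rightarrow> 'a \<Rightarrow> bool) \<Rightarrow> 'a topology" where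
  "interval_topology P le =
     topology_generated_by {open_interval P le a b | a b. a \<in> P \<and> b \<in> P}"

definition globally_hyperbolic :: "'a set \<Rightarrow> ('a \<Rightarrow> 'a \<Rightarrow> bool) \<Rightarrow> bool" where
  "globally_hyperbolic P le \<longleftrightarrow> bicontinuous P le \<and>
     (\<forall>a\<in>P. \<forall>b\<in>P. compactin (interval_topology P le) {x \<in> P. le a x \<and> le x b})"

definition continuous_dcpo :: "'a set \<Rightarrow> ('a \<Rightarrow> 'a \<Rightarrow> bool) \<Rightarrow> bool" where
  "continuous_dcpo P le \<longleftrightarrow> continuous_poset P le \<and> (\<forall>S. directed P le S \<longrightarrow> (\<exists>s. is_sup P le S s))"

definition max_elems :: "'a set \<Rightarrow> ('a \<Rightarrow> 'a \<Rightarrow> bool) \<Rightarrow> 'a set" where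
  "max_elems P le = {x \<in> P. \<forall>y\<in>P. le x y \<longrightarrow> y = x}"

definition scott_open :: "'a set \<Rightarrow> ('a \<Rightarrow> 'a \<Rightarrow> bool) \<Rightarrow> 'a set \<Rightarrow> bool" where
  "scott_open P le U \<longleftrightarrow> U \<subseteq> P \<and> (\<forall>x\<in>U. \<forall>y\<in>P. le x y \<longrightarrow> y \<in> U)
     \<and> (\<forall>S s. directed P le S \<longrightarrow> is_sup P le S s \<longrightarrow> s \<in> U \<longrightarrow> S \<inter> U \<noteq> {})"

lemma istopology_scott_open: "istopology (scott_open P le)"
  unfolding istopology_def
proof (intro conjI allI impI)
  fix U V assume U: "scott_open P le U" and V: "scott_open P le V"
  show "scott_open P le (U \<inter> V)"
    unfolding scott_open_def
  proof (intro conjI ballI allI impI)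
    show "U \<inter> V \<subseteq> P" using U unfolding scott_open_def by blast
  next
    fix x y assume "x \<in> U \<inter> V" "y \<in> P" "le x y"
    then show "y \<in> U \<inter> V" using U V unfolding scott_open_def by blast
  next
    fix S s assume d: "directed P le S" and sp: "is_sup P le S s" and s: "s \<in> U \<inter> V"
    obtain a where a: "a \<in> S \<inter> U" using U d sp s unfolding scott_open_def by blast
    obtain b where b: "b \<in> S \<inter> V" using V d sp s unfolding scott_open_def by blast
    obtain c where c: "c \<in> S" "le a c" "le b c" using d a b unfolding directed_def by blast
    have "c \<in> P" using d c unfolding directed_def by blast
    then have "c \<in> U \<inter> V" using U V a b c unfolding scott_open_def by blast
    then show "S \<inter> (U \<inter> V) \<noteq> {}" using c by blast
  qed
next
  fix K assume K: "\<forall>U\<in>K. scott_open P le U"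
  show "scott_open P le (\<Union>K)"
    unfolding scott_open_def
  proof (intro conjI ballI allI impI)
    show "\<Union>K \<subseteq> P" using K unfolding scott_open_def by blast
  next
    fix x y assume "x \<in> \<Union>K" "y \<in> P" "le x y"
    then show "y \<in> \<Union>K" using K unfolding scott_open_def by blast
  next
    fix S s assume "directed P le S" "is_sup P le S s" "s \<in> \<Union>K"
    then show "S \<inter> \<Union>K \<noteq> {}" using K unfolding scott_open_def by blast
  qed
qed

definition scott_topology :: "'a set \<Rightarrow> ('a \<Rightarrow> 'a \<Rightarrow> bool) \<Rightarrow> 'a topology" where
  "scott_topology P le = topology (scott_open P le)"

text \<open>Interval posets. Only the named infima are asserted to exist.\<close>
definition interval_poset :: "'a set \<Rightarrow> ('a \<Rightarrow> 'a \<Rightarrow> bool) \<Rightarrow> ('a \<Rightarrow> 'a) \<Rightarrow> ('a \<Rightarrow> 'a) \<Rightarrow> bool" where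
  "interval_poset D le left right \<longleftrightarrow> poset D le
     \<and> (\<forall>x\<in>D. left x \<in> max_elems D le \<and> right x \<in> max_elems D le)
     \<and> (\<forall>x\<in>D. is_inf D le {left x, right x} x)
     \<and> (\<forall>x\<in>D. \<forall>y\<in>D. right x = left y \<longrightarrow>
          (\<exists>z. is_inf D le {x, y} z \<and> left z = left x \<and> right z = right y))
     \<and> (\<forall>x\<in>D. \<forall>p\<in>max_elems D le. le x p \<longrightarrow>
          (\<exists>z. is_inf D le {left x, p} z \<and> left z = left x \<and> right z = p)
        \<and> (\<exists>z. is_inf D le {p, right x} z \<and> left z = p \<and> right z = right x))"

definition ileq :: "'a set \<Rightarrow> ('a \<Rightarrow> 'a) \<Rightarrow> ('a \<Rightarrow> 'a) \<Rightarrow> 'a \<Rightarrow> 'a \<Rightarrow> bool" where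
  "ileq D left right a b \<longleftrightarrow> (\<exists>z\<in>D. left z = a \<and> right z = b)"

definition left_fib :: "'a set \<Rightarrow> ('a \<Rightarrow> 'a) \<Rightarrow> 'a \<Rightarrow> 'a set" where
  "left_fib D left p = {z \<in> D. left z = p}"

definition right_fib :: "'a set \<Rightarrow> ('a \<Rightarrow> 'a) \<Rightarrow> 'a \<Rightarrow> 'a set" where
  "right_fib D right q = {z \<in> D. right z = q}"

definition interval_domain :: "'a set \<Rightarrow> ('a \<Rightarrow> 'a \<Rightarrow> bool) \<Rightarrow> ('a \<Rightarrow> 'a) \<Rightarrow> ('a \<Rightarrow> 'a) \<Rightarrow> bool" where
  "interval_domain D le left right \<longleftrightarrow> interval_poset D le left right
     \<and> continuous_dcpo D le
     \<comment> \<open>(i)\<close>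
     \<and> (\<forall>x\<in>D. \<forall>p. p \<in> wb_up D le x \<inter> max_elems D le \<longrightarrow>
          wb_up D le (meet D le (left x) p) \<noteq> {} \<and> wb_up D le (meet D le p (right x)) \<noteq> {})
     \<comment> \<open>(ii)\<close>
     \<and> (\<forall>x\<in>D.
          (wb_up D le x \<noteq> {} \<longleftrightarrow>
            (\<forall>y\<in>left_fib D left (left x). le y x \<longrightarrow>
               way_below (right_fib D right (right y)) le y (right y)))
        \<and> (wb_up D le x \<noteq> {} \<longleftrightarrow>
            (\<forall>y\<in>right_fib D right (right x). le y x \<longrightarrow>
               way_below (left_fib D left (left y)) le y (left y))))
     \<comment> \<open>(iii)(a)\<close>
     \<and> (\<forall>p\<in>max_elems D le. \<forall>S. directed D le S \<and> S \<subseteq> left_fib D left p \<longrightarrow>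
          left (psup D le S) = p
          \<and> (\<forall>q\<in>max_elems D le. \<forall>T. directed D le T \<and> T \<subseteq> left_fib D left q
               \<and> right ` T = right ` S \<longrightarrow> right (psup D le S) = right (psup D le T)))
     \<comment> \<open>(iii)(b)\<close>
     \<and> (\<forall>q\<in>max_elems D le. \<forall>S. directed D le S \<and> S \<subseteq> right_fib D right q \<longrightarrow>
          right (psup D le S) = q
          \<and> (\<forall>p\<in>max_elems D le. \<forall>T. directed D le T \<and> T \<subseteq> right_fib D right p
               \<and> left ` T = left ` S \<longrightarrow> left (psup D le S) = left (psup D le T)))
     \<comment> \<open>(iv)\<close>
     \<and> (\<forall>x\<in>D. compactin (subtopology (scott_topology D le) (max_elems D le))
                 {y \<in> max_elems D le. le x y})"

definition phi_inv :: "'a set \<Rightarrow> ('a \<Rightarrow> 'a) \<Rightarrow> ('a \<Rightarrow> 'a) \<Rightarrow> 'a \<Rightarrow> 'a \<Rightarrow> 'a" where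
  "phi_inv D left right a b = (THE z. z \<in> D \<and> left z = a \<and> right z = b)"

end

theory Submission
  imports Defs
begin

text \<open>An element x of D is the closed interval [left x, right x] of max(D), ordered by \<preceq>,
  and x \<sqsubseteq> y is reverse inclusion of intervals. Axiom (iii) makes directed suprema
  endpointwise: left (\<Squnion>S) is the supremum of the left endpoints and right (\<Squnion>S) the infimum
  of the right endpoints. Axiom (ii) identifies a \<ll> b in max(D) with [a, b] having something
  way above it, and together with axiom (i) this shows that x \<ll> p for maximal p forces
  left x \<ll> p \<ll> right x. Conversely, if a \<ll> p \<ll> b then every directed S with supremum p
  contains an interval inside [a, b], so [a, b] \<ll> p. Thus the basic open sets (a, b) are the
  traces on max(D) of the Scott open sets \<Up>[a, b], and the approximants of a maximal point give
  enough of them; the closed intervals are the sets \<up>[a, b] \<inter> max(D), compact by axiom (iv).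
  Exchanging left and right reverses \<preceq>, so every argument is needed on one side only.\<close>

section \<open>Posets and the way-below relation\<close>

lemma directed_dual: "directed P (\<lambda>x y. le y x) S \<longleftrightarrow> filtered P le S"
  unfolding directed_def filtered_def by auto

lemma is_sup_dual: "is_sup P (\<lambda>x y. le y x) S s \<longleftrightarrow> is_inf P le S s"
  unfolding is_sup_def is_inf_def by auto

lemma poset_dual: "poset P (\<lambda>x y. le y x) \<longleftrightarrow> poset P le"
  unfolding poset_def by blast

lemma way_below_dual:
  "way_below P (\<lambda>x y. le y x) x y \<longleftrightarrow> x \<in> P \<and> y \<in> P \<and>
     (\<forall>S i. filtered P le S \<longrightarrow> is_inf P le S i \<longrightarrow> le i y \<longrightarrow> (\<exists>s\<in>S. le s x))"
  unfolding way_below_def directed_dual is_sup_dual ..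

lemma poset_refl: "poset P le \<Longrightarrow> x \<in> P \<Longrightarrow> le x x"
  unfolding poset_def by blast

lemma poset_antisym: "poset P le \<Longrightarrow> x \<in> P \<Longrightarrow> y \<in> P \<Longrightarrow> le x y \<Longrightarrow> le y x \<Longrightarrow> x = y"
  unfolding poset_def by blast

lemma poset_trans:
  "poset P le \<Longrightarrow> x \<in> P \<Longrightarrow> y \<in> P \<Longrightarrow> z \<in> P \<Longrightarrow> le x y \<Longrightarrow> le y z \<Longrightarrow> le x z"
  unfolding poset_def by blast

lemma directed_subset: "directed P le S \<Longrightarrow> S \<subseteq> Q \<Longrightarrow> directed Q le S"
  unfolding directed_def by blast

lemma is_sup_unique: "poset P le \<Longrightarrow> is_sup P le S s \<Longrightarrow> is_sup P le S t \<Longrightarrow> s = t"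
  unfolding is_sup_def by (blast intro: poset_antisym)

lemma is_inf_unique: "poset P le \<Longrightarrow> is_inf P le S s \<Longrightarrow> is_inf P le S t \<Longrightarrow> s = t"
  unfolding is_inf_def by (blast intro: poset_antisym)

lemma psup_eq: "poset P le \<Longrightarrow> is_sup P le S s \<Longrightarrow> psup P le S = s"
  unfolding psup_def by (rule the_equality) (auto intro: is_sup_unique)

lemma meet_eq: "poset P le \<Longrightarrow> is_inf P le {x, y} i \<Longrightarrow> meet P le x y = i"
  unfolding meet_def by (rule the_equality) (auto intro: is_inf_unique)

lemma meet_commute: "meet P le x y = meet P le y x"
  unfolding meet_def by (simp add: insert_commute)

lemma max_elemsD: "p \<in> max_elems P le \<Longrightarrow> p \<in> P"
  unfolding max_elems_def by blast

lemma max_elems_eq: "p \<in> max_elems P le \<Longrightarrow> y \<in> P \<Longrightarrow> le p y \<Longrightarrow> y = p"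
  unfolding max_elems_def by blast

lemma way_belowD:
  "way_below P le x y \<Longrightarrow> directed P le S \<Longrightarrow> is_sup P le S s \<Longrightarrow> le y s \<Longrightarrow> \<exists>t\<in>S. le x t"
  unfolding way_below_def by blast

lemma way_below_le:
  assumes "poset P le" and "way_below P le x y"
  shows "le x y"
proof -
  have y: "y \<in> P" using assms(2) unfolding way_below_def by blast
  have "directed P le {y}" "is_sup P le {y} y"
    using y poset_refl[OF assms(1) y] unfolding directed_def is_sup_def by auto
  then show ?thesis using way_belowD[OF assms(2)] poset_refl[OF assms(1) y] by blast
qed

lemma way_below_le_trans:
  assumes po: "poset P le" and xy: "way_below P le x y" and "le y z" "z \<in> P"
  shows "way_below P le x z"
  unfolding way_below_def
proof (intro conjI allI impI)
  show "x \<in> P" "z \<in> P" using assms unfolding way_below_def by auto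
  fix S s assume S: "directed P le S" "is_sup P le S s" and "le z s"
  then have "le y s"
    using assms poset_trans[OF po, of y z s] unfolding way_below_def is_sup_def by blast
  then show "\<exists>t\<in>S. le x t" using way_belowD[OF xy S] by blast
qed

lemma le_way_below_trans:
  assumes po: "poset P le" and "le x y" and yz: "way_below P le y z" and "x \<in> P"
  shows "way_below P le x z"
  unfolding way_below_def
proof (intro conjI allI impI)
  show "x \<in> P" "z \<in> P" using assms unfolding way_below_def by auto
  fix S s assume S: "directed P le S" "is_sup P le S s" and "le z s"
  then obtain t where "t \<in> S" "le y t" using way_belowD[OF yz] by blast
  moreover have "y \<in> P" "t \<in> P" using yz S(1) \<open>t \<in> S\<close> unfolding way_below_def directed_def by auto
  ultimately show "\<exists>t\<in>S. le x t" using assms poset_trans[OF po, of x y t] by blast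
qed

lemma continuous_poset_poset: "continuous_poset P le \<Longrightarrow> poset P le"
  unfolding continuous_poset_def by blast

lemma wb_down_directed_sup:
  assumes cp: "continuous_poset P le" and y: "y \<in> P"
  shows "directed P le (wb_down P le y)" "is_sup P le (wb_down P le y) y"
proof -
  have po: "poset P le" using cp by (rule continuous_poset_poset)
  obtain S where S: "S \<subseteq> wb_down P le y" "directed P le S" "is_sup P le S y"
    using cp y unfolding continuous_poset_def by blast
  have S_P: "S \<subseteq> P" using S(2) unfolding directed_def by blast
  have above_S: "\<exists>s\<in>S. le z s" if "z \<in> wb_down P le y" for z
  proof -
    have "way_below P le z y" using that unfolding wb_down_def by blast
    from way_belowD[OF this S(2,3) poset_refl[OF po y]] show ?thesis .
  qed
  show "directed P le (wb_down P le y)"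
    unfolding directed_def
  proof (intro conjI ballI)
    show "wb_down P le y \<subseteq> P" unfolding wb_down_def by blast
    show "wb_down P le y \<noteq> {}" using S(1,2) unfolding directed_def by blast
    fix z1 z2 assume z: "z1 \<in> wb_down P le y" "z2 \<in> wb_down P le y"
    obtain s1 s2 where s: "s1 \<in> S" "le z1 s1" "s2 \<in> S" "le z2 s2"
      using above_S[OF z(1)] above_S[OF z(2)] by blast
    obtain s3 where s3: "s3 \<in> S" "le s1 s3" "le s2 s3"
      using S(2) s(1,3) unfolding directed_def by blast
    have "z1 \<in> P" "z2 \<in> P" using z unfolding wb_down_def by auto
    then have "le z1 s3" "le z2 s3"
      using s s3 S_P by (meson poset_trans[OF po] subsetD)+
    then show "\<exists>s\<in>wb_down P le y. le z1 s \<and> le z2 s" using s3(1) S(1) by blast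
  qed
  show "is_sup P le (wb_down P le y) y"
    unfolding is_sup_def
  proof (intro conjI ballI impI)
    show "y \<in> P" by (fact y)
    show "le z y" if "z \<in> wb_down P le y" for z
      using that way_below_le[OF po] unfolding wb_down_def by blast
    show "le y u" if "u \<in> P" "\<forall>z\<in>wb_down P le y. le z u" for u
      using that S(1,3) unfolding is_sup_def by blast
  qed
qed

lemma way_below_interpolate:
  assumes cp: "continuous_poset P le" and xy: "way_below P le x y"
  obtains z where "way_below P le x z" "way_below P le z y"
proof -
  have po: "poset P le" using cp by (rule continuous_poset_poset)
  have y: "y \<in> P" and x: "x \<in> P" using xy unfolding way_below_def by blast+
  note approx = wb_down_directed_sup[OF cp]
  define A where "A = (\<Union>z\<in>wb_down P le y. wb_down P le z)"
  have "directed P le A"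
    unfolding directed_def
  proof (intro conjI ballI)
    show "A \<subseteq> P" unfolding A_def wb_down_def by blast
    obtain z where z: "z \<in> wb_down P le y" using approx(1)[OF y] unfolding directed_def by blast
    then have "z \<in> P" unfolding wb_down_def by blast
    then obtain w where "w \<in> wb_down P le z" using approx(1) unfolding directed_def by blast
    then show "A \<noteq> {}" using z unfolding A_def by blast
    fix w1 w2 assume "w1 \<in> A" "w2 \<in> A"
    then obtain z1 z2 where z: "z1 \<in> wb_down P le y" "z2 \<in> wb_down P le y"
      and w: "w1 \<in> wb_down P le z1" "w2 \<in> wb_down P le z2"
      unfolding A_def by blast
    obtain z3 where z3: "z3 \<in> wb_down P le y" "le z1 z3" "le z2 z3"
      using approx(1)[OF y] z unfolding directed_def by blast
    have z3P: "z3 \<in> P" using z3(1) unfolding wb_down_def by blast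
    have "w1 \<in> wb_down P le z3" "w2 \<in> wb_down P le z3"
      using w z3 way_below_le_trans[OF po _ _ z3P] unfolding wb_down_def by blast+
    then obtain w3 where "w3 \<in> wb_down P le z3" "le w1 w3" "le w2 w3"
      using approx(1)[OF z3P] unfolding directed_def by blast
    then show "\<exists>w\<in>A. le w1 w \<and> le w2 w" using z3(1) unfolding A_def by blast
  qed
  moreover have "is_sup P le A y"
    unfolding is_sup_def
  proof (intro conjI ballI impI)
    show "y \<in> P" by (fact y)
  next
    fix w assume "w \<in> A"
    then obtain z where "w \<in> wb_down P le z" "z \<in> wb_down P le y"
      unfolding A_def by blast
    then have "way_below P le w y"
      using le_way_below_trans[OF po] way_below_le[OF po] unfolding wb_down_def by blast
    then show "le w y" by (rule way_below_le[OF po])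
  next
    fix u assume u: "u \<in> P" "\<forall>w\<in>A. le w u"
    have "le z u" if "z \<in> wb_down P le y" for z
    proof -
      have "z \<in> P" using that unfolding wb_down_def by blast
      then show ?thesis using approx(2)[of z] that u unfolding A_def is_sup_def by blast
    qed
    then show "le y u" using approx(2)[OF y] u(1) unfolding is_sup_def by blast
  qed
  ultimately obtain w where "w \<in> A" "le x w"
    using way_belowD[OF xy] poset_refl[OF po y] by blast
  then obtain z where "w \<in> wb_down P le z" "z \<in> wb_down P le y"
    unfolding A_def by blast
  then show ?thesis
    using that le_way_below_trans[OF po \<open>le x w\<close> _ x] unfolding wb_down_def by blast
qed

lemma scott_open_wb_up:
  assumes cp: "continuous_poset P le"
  shows "scott_open P le (wb_up P le x)"
  unfolding scott_open_def
proof (intro conjI ballI allI impI)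
  have po: "poset P le" using cp by (rule continuous_poset_poset)
  show "wb_up P le x \<subseteq> P" unfolding wb_up_def by blast
  show "y \<in> wb_up P le x" if "a \<in> wb_up P le x" "y \<in> P" "le a y" for a y
    using that way_below_le_trans[OF po] unfolding wb_up_def by blast
  fix S s assume S: "directed P le S" "is_sup P le S s" and s: "s \<in> wb_up P le x"
  obtain z where z: "way_below P le x z" "way_below P le z s"
    using way_below_interpolate[OF cp] s unfolding wb_up_def by blast
  have "s \<in> P" using s unfolding wb_up_def by blast
  then obtain t where t: "t \<in> S" "le z t" using way_belowD[OF z(2) S] poset_refl[OF po] by blast
  then have "t \<in> P" using S(1) unfolding directed_def by blast
  then have "t \<in> wb_up P le x" using way_below_le_trans[OF po z(1) t(2)] unfolding wb_up_def by blast
  then show "S \<inter> wb_up P le x \<noteq> {}" using t(1) by blast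
qed

lemma filtered_inf_if_coinitial:
  assumes po: "poset P le" and "R \<subseteq> U" "U \<subseteq> P"
    and R: "filtered P le R" "is_inf P le R i"
    and coinitial: "\<forall>u\<in>U. \<exists>r\<in>R. le r u"
  shows "filtered P le U" "is_inf P le U i"
proof -
  have transP: "le x z" if "x \<in> P" "y \<in> P" "z \<in> P" "le x y" "le y z" for x y z
    using poset_trans[OF po that] .
  show "filtered P le U"
    unfolding filtered_def
  proof (intro conjI ballI)
    show "U \<subseteq> P" "U \<noteq> {}" using assms unfolding filtered_def by blast+
    fix u1 u2 assume u: "u1 \<in> U" "u2 \<in> U"
    then obtain r1 r2 where r: "r1 \<in> R" "le r1 u1" "r2 \<in> R" "le r2 u2" using coinitial by blast
    then obtain r where "r \<in> R" "le r r1" "le r r2" using R(1) unfolding filtered_def by blast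
    moreover have "r \<in> P" "r1 \<in> P" "r2 \<in> P" "u1 \<in> P" "u2 \<in> P"
      using r calculation u assms(2,3) by auto
    ultimately show "\<exists>r\<in>U. le r u1 \<and> le r u2"
      using r transP assms(2) by blast
  qed
  show "is_inf P le U i"
    unfolding is_inf_def
  proof (intro conjI ballI impI)
    show "i \<in> P" using R(2) unfolding is_inf_def by blast
  next
    fix u assume "u \<in> U"
    then obtain r where "r \<in> R" "le r u" using coinitial by blast
    moreover have "le i r" "i \<in> P" using R(2) \<open>r \<in> R\<close> unfolding is_inf_def by auto
    ultimately show "le i u" using transP \<open>u \<in> U\<close> assms(2,3) by blast
  next
    fix v assume "v \<in> P" "\<forall>u\<in>U. le v u"
    then show "le v i" using R(2) assms(2) unfolding is_inf_def by blast
  qed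
qed

section \<open>Interval posets\<close>

lemma left_fib_eq_right_fib: "left_fib = right_fib"
  by (intro ext) (simp add: left_fib_def right_fib_def)

lemma interval_poset_swap:
  assumes "interval_poset D le left right"
  shows "interval_poset D le right left"
proof -
  note ax = assms[unfolded interval_poset_def]
  have glue: "\<exists>z. is_inf D le {x, y} z \<and> right z = right x \<and> left z = left y"
    if "x \<in> D" "y \<in> D" "left x = right y" for x y
    using ax that by (metis insert_commute)
  have split: "(\<exists>z. is_inf D le {right x, p} z \<and> right z = right x \<and> left z = p)
      \<and> (\<exists>z. is_inf D le {p, left x} z \<and> right z = p \<and> left z = left x)"
    if "x \<in> D" "p \<in> max_elems D le" "le x p" for x p
    using ax that by (metis insert_commute)
  show ?thesis
    unfolding interval_poset_def using ax glue split by (simp add: insert_commute)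
qed

locale interval_poset_structure =
  fixes D :: "'a set" and le :: "'a \<Rightarrow> 'a \<Rightarrow> bool" (infix "\<sqsubseteq>" 50)
    and left right :: "'a \<Rightarrow> 'a"
  assumes interval_poset: "interval_poset D le left right"
begin

abbreviation M :: "'a set" where "M \<equiv> max_elems D le"

abbreviation max_le :: "'a \<Rightarrow> 'a \<Rightarrow> bool" (infix "\<preceq>" 50)
  where "a \<preceq> b \<equiv> ileq D left right a b"

abbreviation \<phi> :: "'a \<Rightarrow> 'a \<Rightarrow> 'a" where "\<phi> a b \<equiv> phi_inv D left right a b"

lemma poset: "poset D le"
  using interval_poset unfolding interval_poset_def by blast

lemma left_max: "x \<in> D \<Longrightarrow> left x \<in> M"
  and right_max: "x \<in> D \<Longrightarrow> right x \<in> M"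
  using interval_poset unfolding interval_poset_def by blast+

lemma is_inf_left_right: "x \<in> D \<Longrightarrow> is_inf D le {left x, right x} x"
  using interval_poset unfolding interval_poset_def by blast

lemma is_inf_glue:
  "x \<in> D \<Longrightarrow> y \<in> D \<Longrightarrow> right x = left y \<Longrightarrow>
    \<exists>z. is_inf D le {x, y} z \<and> left z = left x \<and> right z = right y"
  using interval_poset unfolding interval_poset_def by blast

lemma is_inf_left_max:
  "x \<in> D \<Longrightarrow> p \<in> M \<Longrightarrow> x \<sqsubseteq> p \<Longrightarrow>
    \<exists>z. is_inf D le {left x, p} z \<and> left z = left x \<and> right z = p"
  using interval_poset unfolding interval_poset_def by blast

end

sublocale interval_poset_structure \<subseteq> swap: interval_poset_structure D le right left
  by unfold_locales (rule interval_poset_swap[OF interval_poset])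

context interval_poset_structure
begin

lemma swap_ileq: "ileq D right left = (\<lambda>a b. b \<preceq> a)"
  by (intro ext) (auto simp: ileq_def)

lemma swap_phi_inv: "phi_inv D right left a b = \<phi> b a"
  unfolding phi_inv_def by (rule arg_cong[where f = The]) auto

lemma le_refl: "x \<in> D \<Longrightarrow> x \<sqsubseteq> x"
  using poset_refl[OF poset] .

lemma le_trans: "x \<in> D \<Longrightarrow> y \<in> D \<Longrightarrow> z \<in> D \<Longrightarrow> x \<sqsubseteq> y \<Longrightarrow> y \<sqsubseteq> z \<Longrightarrow> x \<sqsubseteq> z"
  using poset_trans[OF poset] .

lemma le_left: "x \<in> D \<Longrightarrow> x \<sqsubseteq> left x"
  and le_right: "x \<in> D \<Longrightarrow> x \<sqsubseteq> right x"
  using is_inf_left_right unfolding is_inf_def by blast+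

lemma left_of_max: "p \<in> M \<Longrightarrow> left p = p"
  and right_of_max: "p \<in> M \<Longrightarrow> right p = p"
proof -
  assume p: "p \<in> M"
  then have pD: "p \<in> D" by (rule max_elemsD)
  show "left p = p" by (rule max_elems_eq[OF p max_elemsD[OF left_max[OF pD]] le_left[OF pD]])
  show "right p = p" by (rule max_elems_eq[OF p max_elemsD[OF right_max[OF pD]] le_right[OF pD]])
qed

lemma interval_eqI:
  assumes "x \<in> D" "y \<in> D" "left x = left y" "right x = right y"
  shows "x = y"
  using is_inf_unique[OF poset is_inf_left_right[OF assms(1)]] is_inf_left_right[OF assms(2)] assms(3,4)
  by simp

lemma ileqI: "x \<in> D \<Longrightarrow> left x \<preceq> right x"
  unfolding ileq_def by blast

lemma ileq_in_max: "a \<preceq> b \<Longrightarrow> a \<in> M" "a \<preceq> b \<Longrightarrow> b \<in> M"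
  unfolding ileq_def using left_max right_max by blast+

lemma ileq_refl: "p \<in> M \<Longrightarrow> p \<preceq> p"
  unfolding ileq_def using left_of_max right_of_max max_elemsD[of p D le] by blast

lemma ileq_trans: "a \<preceq> b \<Longrightarrow> b \<preceq> c \<Longrightarrow> a \<preceq> c"
proof -
  assume "a \<preceq> b" "b \<preceq> c"
  then obtain x y where "x \<in> D" "y \<in> D" "left x = a" "right x = b" "left y = b" "right y = c"
    unfolding ileq_def by blast
  then obtain z where "is_inf D le {x, y} z" "left z = a" "right z = c"
    using is_inf_glue by metis
  then show "a \<preceq> c" unfolding ileq_def is_inf_def by blast
qed

lemma le_max_iff: "x \<in> D \<Longrightarrow> p \<in> M \<Longrightarrow> x \<sqsubseteq> p \<longleftrightarrow> left x \<preceq> p \<and> p \<preceq> right x"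
proof
  assume x: "x \<in> D" and p: "p \<in> M" and "x \<sqsubseteq> p"
  then obtain z z' where "is_inf D le {left x, p} z" "left z = left x" "right z = p"
    and "is_inf D le {right x, p} z'" "right z' = right x" "left z' = p"
    using is_inf_left_max swap.is_inf_left_max by metis
  then show "left x \<preceq> p \<and> p \<preceq> right x" unfolding ileq_def is_inf_def by blast
next
  assume x: "x \<in> D" and p: "p \<in> M" and lpr: "left x \<preceq> p \<and> p \<preceq> right x"
  then obtain w v where w: "w \<in> D" "left w = left x" "right w = p"
    and v: "v \<in> D" "left v = p" "right v = right x"
    unfolding ileq_def by blast
  then obtain u where u: "is_inf D le {w, v} u" "left u = left x" "right u = right x"
    using is_inf_glue[OF w(1) v(1)] by metis
  have "u \<in> D" "u \<sqsubseteq> w" using u(1) unfolding is_inf_def by blast+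
  then have "u = x" "x \<sqsubseteq> w" using interval_eqI[OF _ x] u(2,3) by auto
  moreover have "w \<sqsubseteq> p" using le_right[OF w(1)] w(3) by simp
  ultimately show "x \<sqsubseteq> p" using le_trans[OF x w(1) max_elemsD[OF p]] by blast
qed

lemma le_iff_ileq: "x \<in> D \<Longrightarrow> y \<in> D \<Longrightarrow> x \<sqsubseteq> y \<longleftrightarrow> left x \<preceq> left y \<and> right y \<preceq> right x"
proof
  assume x: "x \<in> D" and y: "y \<in> D" and "x \<sqsubseteq> y"
  then have "x \<sqsubseteq> left y" "x \<sqsubseteq> right y"
    using le_trans[OF x y max_elemsD[OF left_max[OF y]] _ le_left[OF y]]
      le_trans[OF x y max_elemsD[OF right_max[OF y]] _ le_right[OF y]] by simp_all
  then show "left x \<preceq> left y \<and> right y \<preceq> right x"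
    using le_max_iff[OF x left_max[OF y]] le_max_iff[OF x right_max[OF y]] by simp
next
  assume x: "x \<in> D" and y: "y \<in> D" and h: "left x \<preceq> left y \<and> right y \<preceq> right x"
  then have "left x \<preceq> right y" "left y \<preceq> right x"
    using ileq_trans ileqI[OF y] by blast+
  then have "x \<sqsubseteq> left y" "x \<sqsubseteq> right y"
    using le_max_iff[OF x left_max[OF y]] le_max_iff[OF x right_max[OF y]] h by simp_all
  then show "x \<sqsubseteq> y"
    using is_inf_left_right[OF y] x unfolding is_inf_def by blast
qed

lemma ileq_antisym: "a \<preceq> b \<Longrightarrow> b \<preceq> a \<Longrightarrow> a = b"
proof -
  assume ab: "a \<preceq> b" and ba: "b \<preceq> a"
  then obtain z where z: "z \<in> D" "left z = a" "right z = b" unfolding ileq_def by blast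
  have a: "a \<in> M" and b: "b \<in> M" using ileq_in_max[OF ab] by blast+
  then have "a \<sqsubseteq> z"
    using le_iff_ileq[OF max_elemsD[OF a] z(1)] z left_of_max right_of_max ileq_refl ba by simp
  then have "a \<sqsubseteq> b" using le_trans[OF max_elemsD[OF a] z(1) max_elemsD[OF b]] le_right[OF z(1)] z(3) by simp
  then show "a = b" using max_elems_eq[OF a max_elemsD[OF b]] by simp
qed

lemma poset_max: "poset M (\<preceq>)"
  unfolding poset_def using ileq_refl ileq_antisym ileq_trans by blast

lemma phi_inv: "a \<preceq> b \<Longrightarrow> \<phi> a b \<in> D \<and> left (\<phi> a b) = a \<and> right (\<phi> a b) = b"
  unfolding phi_inv_def ileq_def by (rule theI') (auto intro: interval_eqI)

lemma phi_inv_left_right: "x \<in> D \<Longrightarrow> \<phi> (left x) (right x) = x"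
  using phi_inv[OF ileqI] interval_eqI by blast

lemma phi_inv_le_iff: "a \<preceq> b \<Longrightarrow> c \<preceq> d \<Longrightarrow> \<phi> a b \<sqsubseteq> \<phi> c d \<longleftrightarrow> a \<preceq> c \<and> d \<preceq> b"
  using le_iff_ileq[of "\<phi> a b" "\<phi> c d"] phi_inv[of a b] phi_inv[of c d] by simp

lemma phi_inv_le_max_iff: "a \<preceq> b \<Longrightarrow> p \<in> M \<Longrightarrow> \<phi> a b \<sqsubseteq> p \<longleftrightarrow> a \<preceq> p \<and> p \<preceq> b"
  using le_max_iff[of "\<phi> a b" p] phi_inv[of a b] by simp

lemma directed_left_image:
  assumes S: "directed D le S"
  shows "directed M (\<preceq>) (left ` S)"
  unfolding directed_def
proof (intro conjI ballI)
  have S_D: "S \<subseteq> D" using S unfolding directed_def by blast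
  then show "left ` S \<subseteq> M" using left_max by blast
  show "left ` S \<noteq> {}" using S unfolding directed_def by blast
  fix a b assume "a \<in> left ` S" "b \<in> left ` S"
  then obtain s t where st: "s \<in> S" "t \<in> S" "a = left s" "b = left t" by blast
  then obtain u where u: "u \<in> S" "s \<sqsubseteq> u" "t \<sqsubseteq> u" using S unfolding directed_def by blast
  then have "a \<preceq> left u" "b \<preceq> left u"
    using st S_D le_iff_ileq[of s u] le_iff_ileq[of t u] by auto
  then show "\<exists>c\<in>left ` S. a \<preceq> c \<and> b \<preceq> c" using u(1) by blast
qed

lemma phi_inv_image_right_fib:
  "\<forall>a\<in>A. a \<preceq> c \<Longrightarrow> (\<lambda>a. \<phi> a c) ` A \<subseteq> right_fib D right c"
  unfolding right_fib_def using phi_inv by blast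

lemma left_phi_inv_image: "\<forall>a\<in>A. a \<preceq> c \<Longrightarrow> left ` (\<lambda>a. \<phi> a c) ` A = A"
  using phi_inv by (force simp: image_image)

lemma directed_phi_inv_image:
  assumes A: "directed M (\<preceq>) A" and below: "\<forall>a\<in>A. a \<preceq> c"
  shows "directed D le ((\<lambda>a. \<phi> a c) ` A)"
  unfolding directed_def
proof (intro conjI ballI)
  show "(\<lambda>a. \<phi> a c) ` A \<subseteq> D" using below phi_inv by blast
  show "(\<lambda>a. \<phi> a c) ` A \<noteq> {}" using A unfolding directed_def by blast
  fix x y assume "x \<in> (\<lambda>a. \<phi> a c) ` A" "y \<in> (\<lambda>a. \<phi> a c) ` A"
  then obtain a b where ab: "a \<in> A" "b \<in> A" "x = \<phi> a c" "y = \<phi> b c" by blast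
  then obtain d where d: "d \<in> A" "a \<preceq> d" "b \<preceq> d" using A unfolding directed_def by blast
  have c: "c \<in> M" using below d(1) ileq_in_max by blast
  have "x \<sqsubseteq> \<phi> d c" "y \<sqsubseteq> \<phi> d c"
    using ab d below phi_inv_le_iff ileq_refl[OF c] by simp_all
  then show "\<exists>z\<in>(\<lambda>a. \<phi> a c) ` A. x \<sqsubseteq> z \<and> y \<sqsubseteq> z" using d(1) by blast
qed

lemma is_sup_phi_inv_left_image:
  assumes S: "S \<subseteq> D" "is_sup D le S s"
  shows "is_sup D le ((\<lambda>a. \<phi> a (right s)) ` left ` S) s"
proof -
  have s: "s \<in> D" using S(2) unfolding is_sup_def by blast
  have left_below: "left t \<preceq> left s" "right s \<preceq> right t" if "t \<in> S" for t
    using that S le_iff_ileq[OF _ s] unfolding is_sup_def by blast+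
  have below_right: "left t \<preceq> right s" if "t \<in> S" for t
    using ileq_trans[OF left_below(1)[OF that] ileqI[OF s]] .
  have rs: "right s \<in> M" using right_max[OF s] .
  show ?thesis
    unfolding is_sup_def
  proof (intro conjI ballI impI)
    show "s \<in> D" by (fact s)
  next
    fix x assume "x \<in> (\<lambda>a. \<phi> a (right s)) ` left ` S"
    then obtain t where t: "t \<in> S" "x = \<phi> (left t) (right s)" by blast
    show "x \<sqsubseteq> s"
      using le_iff_ileq[OF _ s, of x] phi_inv[OF below_right[OF t(1)]] t left_below ileq_refl[OF rs]
      by simp
  next
    fix v assume v: "v \<in> D" "\<forall>x\<in>(\<lambda>a. \<phi> a (right s)) ` left ` S. x \<sqsubseteq> v"
    have "t \<sqsubseteq> v" if t: "t \<in> S" for t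
    proof -
      have tD: "t \<in> D" using t S(1) by blast
      have "t \<sqsubseteq> \<phi> (left t) (right s)"
        using le_iff_ileq[OF tD, of "\<phi> (left t) (right s)"] phi_inv[OF below_right[OF t]]
          left_below(2)[OF t] ileq_refl[OF left_max[OF tD]] by simp
      moreover have "\<phi> (left t) (right s) \<sqsubseteq> v" using v(2) t by blast
      ultimately show "t \<sqsubseteq> v"
        using le_trans[OF tD _ v(1)] phi_inv[OF below_right[OF t]] by blast
    qed
    then show "s \<sqsubseteq> v" using S(2) v(1) unfolding is_sup_def by blast
  qed
qed

lemma is_sup_right_fib_phi_inv_image:
  assumes A: "is_sup M (\<preceq>) A c"
  shows "is_sup (right_fib D right c) le ((\<lambda>a. \<phi> a c) ` A) c"
proof -
  have c: "c \<in> M" using A unfolding is_sup_def by blast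
  have below: "\<forall>a\<in>A. a \<preceq> c" using A unfolding is_sup_def by blast
  show ?thesis
    unfolding is_sup_def
  proof (intro conjI ballI impI)
    show "c \<in> right_fib D right c"
      unfolding right_fib_def using max_elemsD[OF c] right_of_max[OF c] by simp
  next
    fix x assume "x \<in> (\<lambda>a. \<phi> a c) ` A"
    then show "x \<sqsubseteq> c" using below phi_inv_le_max_iff[OF _ c] ileq_refl[OF c] by auto
  next
    fix u assume u: "u \<in> right_fib D right c" "\<forall>x\<in>(\<lambda>a. \<phi> a c) ` A. x \<sqsubseteq> u"
    have uD: "u \<in> D" and ru: "right u = c" using u(1) unfolding right_fib_def by auto
    have "a \<preceq> left u" if "a \<in> A" for a
      using u(2) that le_iff_ileq[OF _ uD, of "\<phi> a c"] phi_inv[of a c] below by simp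
    then have "c \<preceq> left u" using A left_max[OF uD] unfolding is_sup_def by blast
    moreover have "left u \<preceq> c" using ileqI[OF uD] ru by simp
    ultimately have "left u = c" by (rule ileq_antisym[symmetric])
    then have "u = c"
      using interval_eqI[OF uD max_elemsD[OF c]] ru left_of_max[OF c] right_of_max[OF c] by simp
    then show "c \<sqsubseteq> u" using le_refl[OF uD] by simp
  qed
qed

text \<open>Via left, the right fibre over c is order isomorphic to the down-set of c in max(D).\<close>
lemma way_below_right_fibD:
  assumes wb: "way_below (right_fib D right c) le y c"
    and A: "directed M (\<preceq>) A" "is_sup M (\<preceq>) A c"
  shows "\<exists>a\<in>A. left y \<preceq> a"
proof -
  have c: "c \<in> M" using A(2) unfolding is_sup_def by blast
  have y: "y \<in> D" "right y = c" using wb unfolding way_below_def right_fib_def by auto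
  have below: "\<forall>a\<in>A. a \<preceq> c" using A(2) unfolding is_sup_def by blast
  have "directed (right_fib D right c) le ((\<lambda>a. \<phi> a c) ` A)"
    using directed_subset[OF directed_phi_inv_image[OF A(1) below] phi_inv_image_right_fib[OF below]] .
  then obtain x where "x \<in> (\<lambda>a. \<phi> a c) ` A" "y \<sqsubseteq> x"
    using way_belowD[OF wb _ is_sup_right_fib_phi_inv_image[OF A(2)]] le_refl[OF max_elemsD[OF c]] by blast
  then obtain a where "a \<in> A" "y \<sqsubseteq> \<phi> a c" by blast
  then have "left y \<preceq> a" using le_iff_ileq[OF y(1), of "\<phi> a c"] phi_inv[of a c] below by simp
  then show ?thesis using \<open>a \<in> A\<close> by blast
qed

end

section \<open>Interval domains\<close>

lemma interval_domain_swap: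
  assumes "interval_domain D le left right"
  shows "interval_domain D le right left"
proof -
  have meets: "\<forall>x\<in>D. \<forall>p. p \<in> wb_up D le x \<inter> max_elems D le \<longrightarrow>
      wb_up D le (meet D le (right x) p) \<noteq> {} \<and> wb_up D le (meet D le p (left x)) \<noteq> {}"
    using assms unfolding interval_domain_def by (simp add: meet_commute)
  show ?thesis
    using assms interval_poset_swap[of D le left right] meets
    unfolding interval_domain_def left_fib_eq_right_fib
    by (elim conjE) (intro conjI; (assumption | blast))
qed

locale interval_domain_structure =
  fixes D :: "'a set" and le :: "'a \<Rightarrow> 'a \<Rightarrow> bool" (infix "\<sqsubseteq>" 50)
    and left right :: "'a \<Rightarrow> 'a"
  assumes interval_domain: "interval_domain D le left right"

sublocale interval_domain_structure \<subseteq> interval_poset_structure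
  using interval_domain unfolding interval_domain_def by unfold_locales blast

sublocale interval_domain_structure \<subseteq> swap: interval_domain_structure D le right left
  by unfold_locales (rule interval_domain_swap[OF interval_domain])

context interval_domain_structure
begin

lemma continuous_dcpo: "continuous_dcpo D le"
  using interval_domain unfolding interval_domain_def by blast

lemma continuous_poset: "continuous_poset D le"
  using continuous_dcpo unfolding continuous_dcpo_def by blast

lemma wb_up_meet_nonempty:
  "\<forall>x\<in>D. \<forall>p. p \<in> wb_up D le x \<inter> M \<longrightarrow>
      wb_up D le (meet D le (left x) p) \<noteq> {} \<and> wb_up D le (meet D le p (right x)) \<noteq> {}"
  using interval_domain unfolding interval_domain_def by (elim conjE) assumption

lemma wb_up_meet_left_nonempty:
  assumes "x \<in> D" "p \<in> wb_up D le x" "p \<in> M"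
  shows "wb_up D le (meet D le (left x) p) \<noteq> {}"
  using wb_up_meet_nonempty assms by blast

lemma psup_right_fib:
  "\<forall>q\<in>M. \<forall>S. directed D le S \<and> S \<subseteq> right_fib D right q \<longrightarrow>
      right (psup D le S) = q
      \<and> (\<forall>p\<in>M. \<forall>T. directed D le T \<and> T \<subseteq> right_fib D right p \<and> left ` T = left ` S
           \<longrightarrow> left (psup D le S) = left (psup D le T))"
  using interval_domain unfolding interval_domain_def by (elim conjE) assumption

lemma right_psup_right_fib:
  "q \<in> M \<Longrightarrow> directed D le S \<Longrightarrow> S \<subseteq> right_fib D right q \<Longrightarrow> right (psup D le S) = q"
  using psup_right_fib by blast

lemma left_psup_right_fib_cong:
  "q \<in> M \<Longrightarrow> directed D le S \<Longrightarrow> S \<subseteq> right_fib D right q \<Longrightarrow>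
    p \<in> M \<Longrightarrow> directed D le T \<Longrightarrow> T \<subseteq> right_fib D right p \<Longrightarrow> left ` T = left ` S \<Longrightarrow>
    left (psup D le S) = left (psup D le T)"
  using psup_right_fib by blast

lemma wb_up_nonempty_iff:
  "x \<in> D \<Longrightarrow> wb_up D le x \<noteq> {} \<longleftrightarrow>
    (\<forall>y\<in>left_fib D left (left x). y \<sqsubseteq> x \<longrightarrow>
      way_below (right_fib D right (right y)) le y (right y))"
  using interval_domain unfolding interval_domain_def by (elim conjE) metis

lemma compactin_max_above:
  "x \<in> D \<Longrightarrow> compactin (subtopology (scott_topology D le) M) {y \<in> M. x \<sqsubseteq> y}"
  using interval_domain unfolding interval_domain_def by (elim conjE) metis

lemma is_sup_psup: "directed D le S \<Longrightarrow> is_sup D le S (psup D le S)"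
proof -
  assume "directed D le S"
  then obtain s where "is_sup D le S s" using continuous_dcpo unfolding continuous_dcpo_def by blast
  then show ?thesis using psup_eq[OF poset] by simp
qed

text \<open>Given an upper bound u of the left endpoints, replace each member of S by the interval from
  its left endpoint to right s, resp. to u. The two families lie in right fibres and have the
  same left endpoints, so by axiom (iii)(b) their suprema, s and an interval ending at u, have
  the same left endpoint.\<close>
lemma is_sup_left_image:
  assumes S: "directed D le S"
  shows "is_sup M (\<preceq>) (left ` S) (left (psup D le S))"
proof -
  define s where "s = psup D le S"
  have sup: "is_sup D le S s" using is_sup_psup[OF S] s_def by simp
  have s: "s \<in> D" and S_D: "S \<subseteq> D" using sup S unfolding is_sup_def directed_def by blast+
  have below_s: "a \<preceq> left s" if "a \<in> left ` S" for a
    using that sup S_D le_iff_ileq[OF _ s] unfolding is_sup_def by blast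
  show ?thesis
    unfolding is_sup_def s_def[symmetric]
  proof (intro conjI ballI impI)
    show "left s \<in> M" using left_max[OF s] .
    show "a \<preceq> left s" if "a \<in> left ` S" for a using below_s[OF that] .
  next
    fix u assume u: "u \<in> M" "\<forall>a\<in>left ` S. a \<preceq> u"
    have below_rs: "\<forall>a\<in>left ` S. a \<preceq> right s" using below_s ileq_trans ileqI[OF s] by blast
    define S' where "S' = (\<lambda>a. \<phi> a (right s)) ` left ` S"
    define T where "T = (\<lambda>a. \<phi> a u) ` left ` S"
    have S': "directed D le S'" "S' \<subseteq> right_fib D right (right s)"
      unfolding S'_def using directed_phi_inv_image[OF directed_left_image[OF S] below_rs]
        phi_inv_image_right_fib[OF below_rs] by blast+
    have T: "directed D le T" "T \<subseteq> right_fib D right u"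
      unfolding T_def using directed_phi_inv_image[OF directed_left_image[OF S] u(2)]
        phi_inv_image_right_fib[OF u(2)] by blast+
    have "left ` T = left ` S'"
      unfolding S'_def T_def using left_phi_inv_image below_rs u(2) by simp
    then have "left (psup D le S') = left (psup D le T)"
      using left_psup_right_fib_cong[OF right_max[OF s] S' u(1) T] by blast
    moreover have "psup D le S' = s"
      unfolding S'_def using psup_eq[OF poset is_sup_phi_inv_left_image[OF S_D sup]] .
    moreover have "psup D le T \<in> D" using is_sup_psup[OF T(1)] unfolding is_sup_def by blast
    ultimately show "left s \<preceq> u"
      using ileqI right_psup_right_fib[OF u(1) T] by metis
  qed
qed

lemma way_below_right_fibI:
  assumes y: "y \<in> D" and wb: "way_below M (\<preceq>) (left y) (right y)"
  shows "way_below (right_fib D right (right y)) le y (right y)"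
proof -
  define c where "c = right y"
  have c: "c \<in> M" using right_max[OF y] c_def by simp
  have fib_D: "right_fib D right c \<subseteq> D" unfolding right_fib_def by blast
  show ?thesis
    unfolding way_below_def c_def[symmetric]
  proof (intro conjI allI impI)
    show "y \<in> right_fib D right c" unfolding right_fib_def c_def using y by simp
    show "c \<in> right_fib D right c"
      unfolding right_fib_def using max_elemsD[OF c] right_of_max[OF c] by simp
    fix T s assume T: "directed (right_fib D right c) le T"
      and sup: "is_sup (right_fib D right c) le T s" and "c \<sqsubseteq> s"
    have T_fib: "T \<subseteq> right_fib D right c" using T unfolding directed_def by blast
    then have T_D: "directed D le T" using directed_subset[OF T] fib_D by blast
    have "psup D le T \<in> right_fib D right c"
      using right_psup_right_fib[OF c T_D T_fib] is_sup_psup[OF T_D]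
      unfolding right_fib_def is_sup_def by blast
    then have "s \<sqsubseteq> psup D le T" using sup is_sup_psup[OF T_D] unfolding is_sup_def by blast
    moreover have "s \<in> D" using sup fib_D unfolding is_sup_def by blast
    ultimately have "c \<sqsubseteq> psup D le T"
      using le_trans[OF max_elemsD[OF c]] \<open>c \<sqsubseteq> s\<close> \<open>psup D le T \<in> right_fib D right c\<close> fib_D
      by blast
    then have "psup D le T = c"
      using max_elems_eq[OF c] \<open>psup D le T \<in> right_fib D right c\<close> fib_D by blast
    then have "is_sup M (\<preceq>) (left ` T) c"
      using is_sup_left_image[OF T_D] left_of_max[OF c] by simp
    then obtain t where t: "t \<in> T" "left y \<preceq> left t"
      using way_belowD[OF wb[folded c_def] directed_left_image[OF T_D]] ileq_refl[OF c] by blast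
    have "right t = c" using t(1) T_fib unfolding right_fib_def by blast
    then have "y \<sqsubseteq> t"
      using le_iff_ileq[OF y, of t] t T_fib fib_D ileq_refl[OF c] c_def by auto
    then show "\<exists>t\<in>T. y \<sqsubseteq> t" using t(1) by blast
  qed
qed

lemma wb_up_phi_inv_nonempty_iff:
  assumes ab: "a \<preceq> b"
  shows "wb_up D le (\<phi> a b) \<noteq> {} \<longleftrightarrow> way_below M (\<preceq>) a b"
proof -
  note x = phi_inv[OF ab]
  have "wb_up D le (\<phi> a b) \<noteq> {} \<longleftrightarrow>
      (\<forall>y\<in>left_fib D left a. y \<sqsubseteq> \<phi> a b \<longrightarrow> way_below (right_fib D right (right y)) le y (right y))"
    using wb_up_nonempty_iff x by simp
  also have "\<dots> \<longleftrightarrow> way_below M (\<preceq>) a b"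
  proof
    assume fib: "\<forall>y\<in>left_fib D left a. y \<sqsubseteq> \<phi> a b \<longrightarrow>
      way_below (right_fib D right (right y)) le y (right y)"
    show "way_below M (\<preceq>) a b"
      unfolding way_below_def
    proof (intro conjI allI impI)
      show "a \<in> M" "b \<in> M" using ileq_in_max[OF ab] by blast+
      fix A s assume A: "directed M (\<preceq>) A" "is_sup M (\<preceq>) A s" and "b \<preceq> s"
      then have as: "a \<preceq> s" using ileq_trans[OF ab] by blast
      have "\<phi> a s \<in> left_fib D left a" unfolding left_fib_def using phi_inv[OF as] by simp
      moreover have "\<phi> a s \<sqsubseteq> \<phi> a b"
        using phi_inv_le_iff[OF as ab] ileq_refl ileq_in_max(1)[OF ab] \<open>b \<preceq> s\<close> by blast
      ultimately have "way_below (right_fib D right (right (\<phi> a s))) le (\<phi> a s) (right (\<phi> a s))"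
        using fib by blast
      then have "way_below (right_fib D right s) le (\<phi> a s) s" using phi_inv[OF as] by simp
      from way_below_right_fibD[OF this A] show "\<exists>t\<in>A. a \<preceq> t" using phi_inv[OF as] by simp
    qed
  next
    assume wb: "way_below M (\<preceq>) a b"
    show "\<forall>y\<in>left_fib D left a. y \<sqsubseteq> \<phi> a b \<longrightarrow>
      way_below (right_fib D right (right y)) le y (right y)"
    proof (intro ballI impI)
      fix y assume "y \<in> left_fib D left a" and y_below: "y \<sqsubseteq> \<phi> a b"
      then have y: "y \<in> D" "left y = a" unfolding left_fib_def by blast+
      then have "b \<preceq> right y" using le_iff_ileq[OF y(1) x[THEN conjunct1]] y_below x by simp
      then have "way_below M (\<preceq>) (left y) (right y)"
        using way_below_le_trans[OF poset_max wb _ right_max[OF y(1)]] y(2) by simp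
      then show "way_below (right_fib D right (right y)) le y (right y)"
        by (rule way_below_right_fibI[OF y(1)])
    qed
  qed
  finally show ?thesis .
qed

text \<open>Axiom (i) makes the interval [left x, p] approximable, which by the previous lemma
  means left x way below p.\<close>
lemma way_below_max_left:
  assumes x: "x \<in> D" and p: "p \<in> M" and wb: "way_below D le x p"
  shows "way_below M (\<preceq>) (left x) p"
proof -
  have "x \<sqsubseteq> p" using way_below_le[OF poset wb] .
  then obtain z where z: "is_inf D le {left x, p} z" "left z = left x" "right z = p"
    using is_inf_left_max[OF x p] by blast
  have zD: "z \<in> D" using z(1) unfolding is_inf_def by blast
  have lp: "left x \<preceq> p" using ileqI[OF zD] z(2,3) by simp
  have "\<phi> (left x) p = z" using phi_inv_left_right[OF zD] z(2,3) by simp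
  moreover have "meet D le (left x) p = z" using meet_eq[OF poset z(1)] .
  moreover have "wb_up D le (meet D le (left x) p) \<noteq> {}"
    using wb_up_meet_left_nonempty[OF x _ p] wb max_elemsD[OF p] unfolding wb_up_def by blast
  ultimately show ?thesis using wb_up_phi_inv_nonempty_iff[OF lp] by simp
qed

end

section \<open>Bicontinuity and global hyperbolicity of max(D)\<close>

context interval_domain_structure
begin

lemma way_below_max_iff_dual: "way_below M (\<preceq>) a b \<longleftrightarrow> way_below M (\<lambda>x y. y \<preceq> x) b a"
proof (cases "a \<preceq> b")
  case True
  then show ?thesis
    using wb_up_phi_inv_nonempty_iff[OF True] swap.wb_up_phi_inv_nonempty_iff[of b a]
    unfolding swap_ileq swap_phi_inv by simp
next
  case False
  then show ?thesis
    using way_below_le[OF poset_max] way_below_le[OF poset_dual[THEN iffD2, OF poset_max]]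
    by blast
qed

lemma way_below_max_right:
  assumes "x \<in> D" "p \<in> M" "way_below D le x p"
  shows "way_below M (\<preceq>) p (right x)"
  using swap.way_below_max_left[OF assms] unfolding swap_ileq way_below_max_iff_dual .

lemma is_inf_right_image: "directed D le S \<Longrightarrow> is_inf M (\<preceq>) (right ` S) (right (psup D le S))"
  using swap.is_sup_left_image unfolding swap_ileq is_sup_dual .

lemma filtered_right_image: "directed D le S \<Longrightarrow> filtered M (\<preceq>) (right ` S)"
  using swap.directed_left_image unfolding swap_ileq directed_dual .

lemma way_below_max_iff_filtered:
  assumes "x \<in> M" "y \<in> M"
  shows "way_below M (\<preceq>) x y \<longleftrightarrow>
    (\<forall>S i. filtered M (\<preceq>) S \<longrightarrow> is_inf M (\<preceq>) S i \<longrightarrow> i \<preceq> x \<longrightarrow> (\<exists>s\<in>S. s \<preceq> y))"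
  using way_below_max_iff_dual[of x y] way_below_dual[of M "(\<preceq>)" y x] assms by simp

lemma continuous_max: "continuous_poset M (\<preceq>)"
proof -
  have "\<exists>S. S \<subseteq> M \<inter> wb_down M (\<preceq>) p \<and> directed M (\<preceq>) S \<and> is_sup M (\<preceq>) S p"
    if p: "p \<in> M" for p
  proof (intro exI conjI)
    note approx = wb_down_directed_sup[OF continuous_poset max_elemsD[OF p]]
    show "left ` wb_down D le p \<subseteq> M \<inter> wb_down M (\<preceq>) p"
      using way_below_max_left[OF _ p] left_max p unfolding wb_down_def by blast
    show "directed M (\<preceq>) (left ` wb_down D le p)" using directed_left_image[OF approx(1)] .
    show "is_sup M (\<preceq>) (left ` wb_down D le p) p"
      using is_sup_left_image[OF approx(1)] psup_eq[OF poset approx(2)] left_of_max[OF p] by simp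
  qed
  then show ?thesis unfolding continuous_poset_def using poset_max by blast
qed

text \<open>The right endpoints of the approximants of p form a filtered set with infimum p inside
  the up-set of p, and it is coinitial there.\<close>
lemma wb_up_max_filtered_inf:
  assumes p: "p \<in> M"
  shows "filtered M (\<preceq>) (wb_up M (\<preceq>) p)" "is_inf M (\<preceq>) (wb_up M (\<preceq>) p) p"
proof -
  note approx = wb_down_directed_sup[OF continuous_poset max_elemsD[OF p]]
  have R: "filtered M (\<preceq>) (right ` wb_down D le p)" "is_inf M (\<preceq>) (right ` wb_down D le p) p"
    using filtered_right_image[OF approx(1)] is_inf_right_image[OF approx(1)]
      psup_eq[OF poset approx(2)] right_of_max[OF p] by simp_all
  have "right ` wb_down D le p \<subseteq> wb_up M (\<preceq>) p"
    using way_below_max_right[OF _ p] right_max unfolding wb_down_def wb_up_def by blast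
  moreover have "\<forall>b\<in>wb_up M (\<preceq>) p. \<exists>r\<in>right ` wb_down D le p. r \<preceq> b"
    using way_below_max_iff_filtered[OF p] R ileq_refl[OF p] unfolding wb_up_def by blast
  moreover have "wb_up M (\<preceq>) p \<subseteq> M" unfolding wb_up_def by blast
  ultimately show "filtered M (\<preceq>) (wb_up M (\<preceq>) p)" "is_inf M (\<preceq>) (wb_up M (\<preceq>) p) p"
    using filtered_inf_if_coinitial[OF poset_max _ _ R] by blast+
qed

lemma bicontinuous_max: "bicontinuous M (\<preceq>)"
  unfolding bicontinuous_def
  by (intro conjI ballI continuous_max way_below_max_iff_filtered wb_up_max_filtered_inf)

lemma phi_inv_way_below:
  assumes ap: "way_below M (\<preceq>) a p" and pb: "way_below M (\<preceq>) p b"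
  shows "way_below D le (\<phi> a b) p"
proof -
  have p: "p \<in> M" using ap unfolding way_below_def by blast
  have "a \<preceq> p" "p \<preceq> b" using way_below_le[OF poset_max] ap pb by blast+
  then have ab: "a \<preceq> b" by (rule ileq_trans)
  show ?thesis
    unfolding way_below_def
  proof (intro conjI allI impI)
    show "\<phi> a b \<in> D" "p \<in> D" using phi_inv[OF ab] max_elemsD[OF p] by blast+
    fix S s assume S: "directed D le S" "is_sup D le S s" and "p \<sqsubseteq> s"
    then have "s = p" using max_elems_eq[OF p] unfolding is_sup_def by blast
    then have "psup D le S = p" using psup_eq[OF poset S(2)] by simp
    then have sup: "is_sup M (\<preceq>) (left ` S) p" and inf: "is_inf M (\<preceq>) (right ` S) p"
      using is_sup_left_image[OF S(1)] is_inf_right_image[OF S(1)] left_of_max[OF p]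
        right_of_max[OF p] by simp_all
    obtain t1 where t1: "t1 \<in> S" "a \<preceq> left t1"
      using way_belowD[OF ap directed_left_image[OF S(1)] sup ileq_refl[OF p]] by blast
    obtain t2 where t2: "t2 \<in> S" "right t2 \<preceq> b"
      using pb way_below_max_iff_filtered[OF p] filtered_right_image[OF S(1)] inf ileq_refl[OF p]
      unfolding way_below_def by blast
    obtain t where t: "t \<in> S" "t1 \<sqsubseteq> t" "t2 \<sqsubseteq> t" using S(1) t1 t2 unfolding directed_def by blast
    have S_D: "S \<subseteq> D" using S(1) unfolding directed_def by blast
    have "a \<preceq> left t" "right t \<preceq> b"
      using t t1 t2 S_D le_iff_ileq[of t1 t] le_iff_ileq[of t2 t] ileq_trans by blast+
    then have "\<phi> a b \<sqsubseteq> t" using le_iff_ileq[of "\<phi> a b" t] phi_inv[OF ab] t(1) S_D by auto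
    then show "\<exists>t\<in>S. \<phi> a b \<sqsubseteq> t" using t(1) by blast
  qed
qed

lemma open_interval_eq:
  assumes ab: "a \<preceq> b"
  shows "open_interval M (\<preceq>) a b = wb_up D le (\<phi> a b) \<inter> M"
proof (intro set_eqI iffI)
  fix p assume "p \<in> open_interval M (\<preceq>) a b"
  then show "p \<in> wb_up D le (\<phi> a b) \<inter> M"
    using phi_inv_way_below max_elemsD[of p D le] unfolding open_interval_def wb_up_def by blast
next
  fix p assume "p \<in> wb_up D le (\<phi> a b) \<inter> M"
  then have p: "p \<in> M" and wb: "way_below D le (\<phi> a b) p" unfolding wb_up_def by blast+
  show "p \<in> open_interval M (\<preceq>) a b"
    using way_below_max_left[OF _ p wb] way_below_max_right[OF _ p wb] phi_inv[OF ab] p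
    unfolding open_interval_def by simp
qed

lemma open_interval_empty: "\<not> a \<preceq> b \<Longrightarrow> open_interval M (\<preceq>) a b = {}"
  unfolding open_interval_def using way_below_le[OF poset_max] ileq_trans by blast

lemma open_interval_nbhd:
  assumes V: "scott_open D le V" and p: "p \<in> V \<inter> M"
  obtains x where "x \<in> D" "p \<in> open_interval M (\<preceq>) (left x) (right x)"
    "open_interval M (\<preceq>) (left x) (right x) \<subseteq> V \<inter> M"
proof -
  have pM: "p \<in> M" and pV: "p \<in> V" using p by blast+
  note approx = wb_down_directed_sup[OF continuous_poset max_elemsD[OF pM]]
  obtain x where x: "x \<in> wb_down D le p" "x \<in> V"
    using V approx pV unfolding scott_open_def by blast
  have xD: "x \<in> D" and wb: "way_below D le x p" using x(1) unfolding wb_down_def by blast+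
  have "p \<in> open_interval M (\<preceq>) (left x) (right x)"
    using way_below_max_left[OF xD pM wb] way_below_max_right[OF xD pM wb] pM
    unfolding open_interval_def by blast
  moreover have "open_interval M (\<preceq>) (left x) (right x) \<subseteq> V \<inter> M"
  proof
    fix q assume "q \<in> open_interval M (\<preceq>) (left x) (right x)"
    then have q: "q \<in> M" "left x \<preceq> q" "q \<preceq> right x"
      using way_below_le[OF poset_max] unfolding open_interval_def by blast+
    then have "x \<sqsubseteq> q" using le_max_iff[OF xD q(1)] by blast
    then show "q \<in> V \<inter> M" using V x(2) q(1) max_elemsD[OF q(1)] unfolding scott_open_def by blast
  qed
  ultimately show thesis using that xD by blast
qed

lemma interval_topology_eq_scott: "interval_topology M (\<preceq>) = subtopology (scott_topology D le) M"
proof -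
  have scott: "openin (scott_topology D le) V \<longleftrightarrow> scott_open D le V" for V
    unfolding scott_topology_def using topology_inverse'[OF istopology_scott_open[of D le]] by simp
  define B where "B = {open_interval M (\<preceq>) a b | a b. a \<in> M \<and> b \<in> M}"
  have basis_open: "openin (subtopology (scott_topology D le) M) I" if "I \<in> B" for I
  proof -
    from \<open>I \<in> B\<close> obtain a b where I: "I = open_interval M (\<preceq>) a b" unfolding B_def by blast
    show ?thesis
    proof (cases "a \<preceq> b")
      case True
      then show ?thesis
        unfolding I open_interval_eq[OF True] openin_subtopology scott
        using scott_open_wb_up[OF continuous_poset] by blast
    next
      case False
      then show ?thesis unfolding I open_interval_empty[OF False] by simp
    qed
  qed
  have union_of_basis: "generate_topology_on B U"
    if U: "openin (subtopology (scott_topology D le) M) U" for U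
  proof -
    obtain V where V: "scott_open D le V" "U = V \<inter> M"
      using U unfolding openin_subtopology scott by blast
    have "\<exists>I\<in>B. p \<in> I \<and> I \<subseteq> U" if p: "p \<in> U" for p
    proof -
      obtain x where "x \<in> D" "p \<in> open_interval M (\<preceq>) (left x) (right x)"
        "open_interval M (\<preceq>) (left x) (right x) \<subseteq> U"
        using open_interval_nbhd[OF V(1)] p V(2) by blast
      moreover have "open_interval M (\<preceq>) (left x) (right x) \<in> B"
        unfolding B_def using left_max[OF \<open>x \<in> D\<close>] right_max[OF \<open>x \<in> D\<close>] by auto
      ultimately show ?thesis by blast
    qed
    then have "U = \<Union>{I \<in> B. I \<subseteq> U}" by blast
    moreover have "generate_topology_on B (\<Union>{I \<in> B. I \<subseteq> U})"
      by (rule generate_topology_on.UN) (blast intro: generate_topology_on.Basis)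
    ultimately show ?thesis by simp
  qed
  have "openin (subtopology (scott_topology D le) M) U" if "generate_topology_on B U" for U
    using generate_topology_on_coarsest[OF istopology_openin basis_open that] .
  then show ?thesis
    unfolding topology_eq interval_topology_def openin_topology_generated_by_iff B_def[symmetric]
    using union_of_basis by blast
qed

lemma globally_hyperbolic_max: "globally_hyperbolic M (\<preceq>)"
  unfolding globally_hyperbolic_def
proof (intro conjI ballI)
  show "bicontinuous M (\<preceq>)" by (fact bicontinuous_max)
  fix a b assume "a \<in> M" "b \<in> M"
  show "compactin (interval_topology M (\<preceq>)) {x \<in> M. a \<preceq> x \<and> x \<preceq> b}"
  proof (cases "a \<preceq> b")
    case True
    then have "{x \<in> M. a \<preceq> x \<and> x \<preceq> b} = {x \<in> M. \<phi> a b \<sqsubseteq> x}"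
      using phi_inv_le_max_iff by blast
    then show ?thesis
      unfolding interval_topology_eq_scott using compactin_max_above phi_inv[OF True] by simp
  next
    case False
    then have empty: "{x \<in> M. a \<preceq> x \<and> x \<preceq> b} = {}" using ileq_trans by blast
    show ?thesis unfolding empty by (rule compactin_empty)
  qed
qed

end

theorem mainTheorem13:
  fixes D :: "'a set" and le :: "'a \<Rightarrow> 'a \<Rightarrow> bool" and left right :: "'a \<Rightarrow> 'a"
  assumes "interval_domain D le left right"
  shows "(\<forall>a p b. way_below (max_elems D le) (ileq D left right) a p
                \<and> way_below (max_elems D le) (ileq D left right) p b
                \<longrightarrow> way_below D le (phi_inv D left right a b) p)
       \<and> interval_topology (max_elems D le) (ileq D left right)
           = subtopology (scott_topology D le) (max_elems D le)
       \<and> globally_hyperbolic (max_elems D le) (ileq D left right)"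
proof -
  interpret interval_domain_structure D le left right
    by unfold_locales (fact assms)
  show ?thesis
    using phi_inv_way_below interval_topology_eq_scott globally_hyperbolic_max by blast
qed

end
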